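(* Let $r\geqslant 2$ and $n\geqslant 2r-1$. Let $\pi,\beta\in\mathrm{Sym}_n$ with $w_H(\pi)=w_H(\beta)=2r-1$ and $Ts(\pi)=Ts(\beta)$. Suppose $\beta$ has a cycle $(y_1\,y_2\,\ldots\,y_t)$, and $\pi$ is obtained from $\beta$ by replacing this cycle with the two cycles $(y_1\,\ldots\,y_s)$ and $(y_{s+1}\,\ldots\,y_t)$ for some $2\leqslant s\leqslant t-2$, keeping all other cycles of $\beta$. Then $|N_1(\pi)|\geqslant|N_1(\beta)|$ and $|N_2(\pi)|\geqslant|N_2(\beta)|$.
   Context: $\mathrm{Sym}_n$ is the symmetric group on $[n]$, and $w_H(\pi)=|\{i:\pi(i)\neq i\}|$ is the Hamming weight. $Ts(\pi)=\{i:\pi(i)\neq i\}$ and $Tc(\pi)=\{(i,\pi(i)):\pi(i)\neq i\}$. For $\pi$ with $w_H(\pi)=2r-1$, define $N_1(\pi)=\{\sigma\in\mathrm{Sym}_n: Tc(\sigma)\subseteq Tc(\pi),\ |Tc(\sigma)|=r-1\}$, $N_2(\pi)=\{\sigma\in\mathrm{Sym}_n: Tc(\sigma)\subseteq Tc(\pi),\ |Tc(\sigma)|=r\}$, and $N_3(\pi)=\{\sigma\in\mathrm{Sym}_n: |Tc(\sigma)\cap Tc(\pi)|=r-1,\ |Tc(\sigma)|=r\}$. *)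

theory Defs
  imports "HOL-Combinatorics.Permutations"
begin

definition Sym :: "nat \<Rightarrow> (nat \<Rightarrow> nat) set" where
  "Sym n = {\<sigma>. \<sigma> permutes {1..n}}"

definition Ts :: "(nat \<Rightarrow> nat) \<Rightarrow> nat set" where
  "Ts p = {i. p i \<noteq> i}"

definition Tc :: "(nat \<Rightarrow> nat) \<Rightarrow> (nat \<times> nat) set" where
  "Tc p = {(i, p i) | i. p i \<noteq> i}"

definition wH :: "(nat \<Rightarrow> nat) \<Rightarrow> nat" where
  "wH p = card (Ts p)"

definition N1 :: "nat \<Rightarrow> nat \<Rightarrow> (nat \<Rightarrow> nat) \<Rightarrow> (nat \<Rightarrow> nat) set" where
  "N1 n r p = {\<sigma> \<in> Sym n. Tc \<sigma> \<subseteq> Tc p \<and> card (Tc \<sigma>) = r - 1}"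

definition N2 :: "nat \<Rightarrow> nat \<Rightarrow> (nat \<Rightarrow> nat) \<Rightarrow> (nat \<Rightarrow> nat) set" where
  "N2 n r p = {\<sigma> \<in> Sym n. Tc \<sigma> \<subseteq> Tc p \<and> card (Tc \<sigma>) = r}"

end

theory Submission
  imports Defs
begin

text \<open>
  A permutation \<sigma> with Tc \<sigma> \<subseteq> Tc \<beta> agrees with \<beta> on its support, and that support is
  \<beta>-invariant, i.e. a union of cycles of \<beta>. Splitting one cycle of \<beta> into two keeps
  every such union invariant under \<pi> and moved by \<pi>, so restricting \<pi> to the support of
  \<sigma> gives a permutation \<sigma>' with Tc \<sigma>' \<subseteq> Tc \<pi> and the same support as \<sigma>. Since \<sigma> is
  determined by its support, \<sigma> \<mapsto> \<sigma>' is injective and preserves the weight.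
\<close>

definition subperms :: "nat \<Rightarrow> nat \<Rightarrow> (nat \<Rightarrow> nat) \<Rightarrow> (nat \<Rightarrow> nat) set" where
  "subperms n k p = {\<sigma> \<in> Sym n. Tc \<sigma> \<subseteq> Tc p \<and> card (Tc \<sigma>) = k}"

lemma Tc_subset_iff: "Tc \<sigma> \<subseteq> Tc p \<longleftrightarrow> (\<forall>i. \<sigma> i \<noteq> i \<longrightarrow> \<sigma> i = p i)"
  unfolding Tc_def by auto

lemma card_Tc: "card (Tc \<sigma>) = card (Ts \<sigma>)"
proof -
  have "Tc \<sigma> = (\<lambda>i. (i, \<sigma> i)) ` Ts \<sigma>"
    unfolding Tc_def Ts_def by auto
  moreover have "inj_on (\<lambda>i. (i, \<sigma> i)) (Ts \<sigma>)"
    by (auto simp: inj_on_def)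
  ultimately show ?thesis
    by (simp add: card_image)
qed

lemma Ts_restrict_id: "M \<subseteq> Ts p \<Longrightarrow> Ts (restrict_id p M) = M"
  unfolding Ts_def restrict_id_def by auto

lemma Tc_restrict_id_subset: "Tc (restrict_id p M) \<subseteq> Tc p"
  unfolding Tc_subset_iff restrict_id_def by auto

lemma Ts_subset_if_Tc_subset: "Tc \<sigma> \<subseteq> Tc p \<Longrightarrow> Ts \<sigma> \<subseteq> Ts p"
  unfolding Tc_subset_iff Ts_def by auto

lemma restrict_id_Ts_if_Tc_subset: "Tc \<sigma> \<subseteq> Tc p \<Longrightarrow> restrict_id p (Ts \<sigma>) = \<sigma>"
  unfolding Tc_subset_iff Ts_def restrict_id_def by auto

lemma Ts_subset_if_permutes: "\<sigma> permutes S \<Longrightarrow> Ts \<sigma> \<subseteq> S"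
  unfolding Ts_def by (auto dest: permutes_not_in)

lemma image_Ts_subset_if_Tc_subset:
  assumes "\<sigma> permutes S" and "Tc \<sigma> \<subseteq> Tc p"
  shows "p ` Ts \<sigma> \<subseteq> Ts \<sigma>"
proof
  fix z assume "z \<in> p ` Ts \<sigma>"
  then obtain x where x: "\<sigma> x \<noteq> x" and z: "z = p x"
    unfolding Ts_def by auto
  have "\<sigma> (\<sigma> x) \<noteq> \<sigma> x"
    using x permutes_inj[OF assms(1)] by (metis injD)
  then show "z \<in> Ts \<sigma>"
    using x z assms(2) unfolding Tc_subset_iff Ts_def by auto
qed

lemma permutes_restrict_id_invariant:
  assumes "\<pi> permutes S" and "finite M" and "\<pi> ` M \<subseteq> M" and "M \<subseteq> S"
  shows "restrict_id \<pi> M permutes S"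
proof -
  have "inj_on \<pi> M"
    using permutes_inj[OF assms(1)] by (rule inj_on_subset) simp
  then have "bij_betw \<pi> M M"
    using endo_inj_surj[OF assms(2,3)] by (simp add: bij_betw_def)
  then show ?thesis
    using permutes_restrict_id permutes_subset assms(4) by blast
qed

lemma card_subperms_le:
  assumes "\<pi> \<in> Sym n"
    and invariant: "\<And>M. \<beta> ` M \<subseteq> M \<Longrightarrow> M \<subseteq> Ts \<beta> \<Longrightarrow> \<pi> ` M \<subseteq> M \<and> M \<subseteq> Ts \<pi>"
  shows "card (subperms n k \<beta>) \<le> card (subperms n k \<pi>)"
proof -
  have \<pi>: "\<pi> permutes {1..n}"
    using assms(1) by (simp add: Sym_def)
  have support: "\<pi> ` Ts \<sigma> \<subseteq> Ts \<sigma> \<and> Ts \<sigma> \<subseteq> Ts \<pi>" if "\<sigma> \<in> subperms n k \<beta>" for \<sigma>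
  proof (rule invariant)
    have "\<sigma> permutes {1..n}" and "Tc \<sigma> \<subseteq> Tc \<beta>"
      using that by (auto simp: subperms_def Sym_def)
    then show "\<beta> ` Ts \<sigma> \<subseteq> Ts \<sigma>" and "Ts \<sigma> \<subseteq> Ts \<beta>"
      by (simp_all add: image_Ts_subset_if_Tc_subset Ts_subset_if_Tc_subset)
  qed
  have maps: "restrict_id \<pi> (Ts \<sigma>) \<in> subperms n k \<pi>" if \<sigma>: "\<sigma> \<in> subperms n k \<beta>" for \<sigma>
  proof -
    have sub: "Ts \<sigma> \<subseteq> {1..n}"
      using \<sigma> Ts_subset_if_permutes by (auto simp: subperms_def Sym_def)
    then have "finite (Ts \<sigma>)"
      by (rule finite_subset) simp
    then have "restrict_id \<pi> (Ts \<sigma>) permutes {1..n}"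
      using support[OF \<sigma>] sub by (intro permutes_restrict_id_invariant[OF \<pi>]) auto
    moreover have "Ts (restrict_id \<pi> (Ts \<sigma>)) = Ts \<sigma>"
      using support[OF \<sigma>] by (simp add: Ts_restrict_id)
    ultimately show ?thesis
      using \<sigma> Tc_restrict_id_subset by (simp add: subperms_def Sym_def card_Tc)
  qed
  have inj: "inj_on (\<lambda>\<sigma>. restrict_id \<pi> (Ts \<sigma>)) (subperms n k \<beta>)"
  proof (rule inj_onI)
    fix \<sigma> \<tau>
    assume \<sigma>: "\<sigma> \<in> subperms n k \<beta>" and \<tau>: "\<tau> \<in> subperms n k \<beta>"
      and eq: "restrict_id \<pi> (Ts \<sigma>) = restrict_id \<pi> (Ts \<tau>)"
    have "Ts \<sigma> = Ts \<tau>"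
      using arg_cong[OF eq, of Ts] support[OF \<sigma>] support[OF \<tau>] by (simp add: Ts_restrict_id)
    have "\<sigma> = restrict_id \<beta> (Ts \<sigma>)"
      using \<sigma> by (simp add: subperms_def restrict_id_Ts_if_Tc_subset)
    also have "\<dots> = restrict_id \<beta> (Ts \<tau>)"
      using \<open>Ts \<sigma> = Ts \<tau>\<close> by (rule arg_cong)
    also have "\<dots> = \<tau>"
      using \<tau> by (simp add: subperms_def restrict_id_Ts_if_Tc_subset)
    finally show "\<sigma> = \<tau>" .
  qed
  have finite: "finite (subperms n k \<pi>)"
    by (rule finite_subset[of _ "{p. p permutes {1..n}}"])
      (auto simp: subperms_def Sym_def finite_permutations)
  have "(\<lambda>\<sigma>. restrict_id \<pi> (Ts \<sigma>)) ` subperms n k \<beta> \<subseteq> subperms n k \<pi>"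
    using maps by (rule image_subsetI)
  then show ?thesis
    by (rule card_inj_on_le[OF inj _ finite])
qed

lemma cycle_subset_if_invariant:
  assumes cycle: "\<forall>i < length y. \<beta> (y ! i) = y ! ((i + 1) mod length y)"
    and "\<beta> ` M \<subseteq> M" and "x \<in> set y" and "x \<in> M"
  shows "set y \<subseteq> M"
proof
  define t where "t = length y"
  obtain i where i: "i < t" "x = y ! i"
    using assms(3) unfolding t_def in_set_conv_nth by auto
  have orbit: "y ! ((i + d) mod t) \<in> M" for d
  proof (induction d)
    case 0
    then show ?case using i assms(4) by simp
  next
    case (Suc d)
    have "(i + d) mod t < t"
      using i(1) by simp
    then have "\<beta> (y ! ((i + d) mod t)) = y ! ((i + Suc d) mod t)"
      using cycle unfolding t_def by (simp add: mod_Suc_eq)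
    then show ?case
      using Suc assms(2) by (metis image_subset_iff)
  qed
  fix z assume "z \<in> set y"
  then obtain m where m: "m < t" "z = y ! m"
    unfolding t_def in_set_conv_nth by auto
  have "(i + (m + t - i)) mod t = m"
    using i m by simp
  then show "z \<in> M"
    using orbit[of "m + t - i"] m by simp
qed

lemma split_cycle_image:
  assumes "distinct y" and "2 \<le> s" and "s + 2 \<le> length y"
    and split: "\<forall>i < length y. \<pi> (y ! i) =
           (if i = s - 1 then y ! 0
            else if i = length y - 1 then y ! s
            else y ! (i + 1))"
    and "x \<in> set y"
  shows "\<pi> x \<in> set y \<and> \<pi> x \<noteq> x"
proof -
  obtain i where i: "i < length y" "x = y ! i"
    using assms(5) unfolding in_set_conv_nth by auto
  define j where "j = (if i = s - 1 then 0 else if i = length y - 1 then s else i + 1)"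
  have "\<pi> x = y ! j"
    using split i unfolding j_def by auto
  moreover have "j < length y" and "j \<noteq> i"
    using i(1) assms(2,3) unfolding j_def by auto
  ultimately show ?thesis
    using i assms(1) by (simp add: nth_eq_iff_index_eq)
qed

lemma split_cycle_invariant:
  assumes cycle: "\<forall>i < length y. \<beta> (y ! i) = y ! ((i + 1) mod length y)"
    and "distinct y" and "2 \<le> s" and "s + 2 \<le> length y"
    and split: "\<forall>i < length y. \<pi> (y ! i) =
           (if i = s - 1 then y ! 0
            else if i = length y - 1 then y ! s
            else y ! (i + 1))"
    and outside: "\<forall>x. x \<notin> set y \<longrightarrow> \<pi> x = \<beta> x"
    and invariant: "\<beta> ` M \<subseteq> M" and moved: "M \<subseteq> Ts \<beta>"
  shows "\<pi> ` M \<subseteq> M \<and> M \<subseteq> Ts \<pi>"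
proof -
  have "\<pi> x \<in> M \<and> \<pi> x \<noteq> x" if x: "x \<in> M" for x
  proof (cases "x \<in> set y")
    case True
    then show ?thesis
      using split_cycle_image[OF assms(2-5) True]
        cycle_subset_if_invariant[OF cycle invariant True x] by blast
  next
    case False
    then show ?thesis
      using x outside invariant moved unfolding Ts_def by auto
  qed
  then show ?thesis
    unfolding Ts_def by auto
qed

theorem lemma11:
  fixes n r s :: nat and \<pi> \<beta> :: "nat \<Rightarrow> nat" and y :: "nat list"
  assumes "r \<ge> 2" and "n \<ge> 2 * r - 1"
    and "\<pi> \<in> Sym n" and "\<beta> \<in> Sym n"
    and "wH \<pi> = 2 * r - 1" and "wH \<beta> = 2 * r - 1"
    and "Ts \<pi> = Ts \<beta>"
    and "distinct y"
    and "\<forall>i < length y. \<beta> (y ! i) = y ! ((i + 1) mod length y)"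
    and "2 \<le> s" and "s + 2 \<le> length y"
    and "\<forall>i < length y. \<pi> (y ! i) =
           (if i = s - 1 then y ! 0
            else if i = length y - 1 then y ! s
            else y ! (i + 1))"
    and "\<forall>x. x \<notin> set y \<longrightarrow> \<pi> x = \<beta> x"
  shows "card (N1 n r \<pi>) \<ge> card (N1 n r \<beta>) \<and> card (N2 n r \<pi>) \<ge> card (N2 n r \<beta>)"
proof -
  have "card (subperms n k \<beta>) \<le> card (subperms n k \<pi>)" for k
    using card_subperms_le[OF assms(3)] split_cycle_invariant[OF assms(9,8,10-13)] by blast
  then show ?thesis
    by (simp add: N1_def N2_def flip: subperms_def)
qed

end
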